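(* Let $\Gamma$ be a finite game with CPT players. For a profile of conjectures $\sigma^*=(\sigma^*_1,\dots,\sigma^*_n)\in\prod_i\Delta(A_i)$ consider the condition $$(\ast)\qquad \sigma_i^*\in\overline{co}\big(\mathcal{B}_i(\mu_{-i}(\sigma^*_{-i}))\big)\ \text{ for all } i\in N.$$ (i) If $\tau=(\tau_1,\dots,\tau_n)$ is a mixed black-box strategy Nash equilibrium, then $\sigma^*$ defined by $\sigma^*_i=\sigma_i(\tau_i)$ for all $i$ satisfies $(\ast)$. (ii) If $\sigma^*$ satisfies $(\ast)$, then there exists a mixed black-box strategy Nash equilibrium $\dot\tau=(\dot\tau_1,\dots,\dot\tau_n)$ in which each $\dot\tau_i$ is a finitely supported probability measure on $B_i$ and $\sigma_i(\dot\tau_i)=\sigma^*_i$ for all $i$.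
   Context: A game $\Gamma=(N,(A_i),(x_i))$: players $N=\{1,\dots,n\}$, finite action sets $A_i$, payoffs $x_i:A\to\mathbb{R}$, $A=\prod_iA_i$, $A_{-i}=\prod_{j\neq i}A_j$. Each player $i$ has CPT preferences with CPT value functional $V_i$ on finite lotteries (determined by a reference point, a continuous strictly increasing value function vanishing at the reference point, and continuous strictly increasing probability weighting functions $w_i^\pm:[0,1]\to[0,1]$ fixing $0$ and $1$, via the standard rank-dependent CPT formula). $B_i=\Delta(A_i)$ is the set of black-box strategies; for a belief $\mu_{-i}\in\Delta(A_{-i})$ and $b_i\in B_i$, $\mu(b_i,\mu_{-i})[a]=b_i[a_i]\mu_{-i}[a_{-i}]$, and $\mathcal{B}_i(\mu_{-i})=\arg\max_{b_i\in B_i}V_i(\{(\mu(b_i,\mu_{-i})[a],x_i(a))\}_{a\in A})$. A conjecture over player $j$'s action is $\sigma_j\in\Delta(A_j)$; for $\sigma_{-i}=(\sigma_j)_{j\neq i}$, $\mu_{-i}(\sigma_{-i})\in\Delta(A_{-i})$ is the product distribution $\mu_{-i}(\sigma_{-i})[a_{-i}]=\prod_{j\ne i}\sigma_j[a_j]$. A conjecture over player $i$'s black-box strategy is a Borel probability measure $\tau_i$ on $B_i$; it induces $\sigma_i(\tau_i)\in\Delta(A_i)$, $\sigma_i(\tau_i)[a_i]=\mathbb{E}_{\tau_i}b_i[a_i]$; write $\sigma_{-i}(\tau_{-i})=(\sigma_j(\tau_j))_{j\ne i}$. A profile $\tau=(\tau_1,\dots,\tau_n)$ is a mixed black-box strategy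 Nash equilibrium if for every $i$ and every $b_i\in\operatorname{supp}\tau_i$, $b_i\in\mathcal{B}_i(\mu_{-i}(\sigma_{-i}(\tau_{-i})))$. $\overline{co}$ denotes closed convex hull. *)

theory Defs
  imports "HOL-Analysis.Analysis" "HOL-Probability.Probability"
begin

text \<open>Players form a finite type 'p; all actions live in a
finite type 'a, player i's action set being acts G i.
Mixed actions / black-box strategies of player i are vectors in real^'a supported on acts G i.\<close>

record ('p, 'a) cpt_game =
  acts   :: "'p \<Rightarrow> 'a set"
  pay    :: "'p \<Rightarrow> ('p \<Rightarrow> 'a) \<Rightarrow> real"
  refpt  :: "'p \<Rightarrow> real"
  valfun :: "'p \<Rightarrow> real \<Rightarrow> real"
  wplus  :: "'p \<Rightarrow> real \<Rightarrow> real"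
  wminus :: "'p \<Rightarrow> real \<Rightarrow> real"

definition prob_weighting :: "(real \<Rightarrow> real) \<Rightarrow> bool" where
  "prob_weighting w \<longleftrightarrow> continuous_on {0..1} w \<and> strict_mono_on {0..1} w \<and>
     w ` {0..1} \<subseteq> {0..1} \<and> w 0 = 0 \<and> w 1 = 1"

definition is_cpt_game :: "('p, 'a) cpt_game \<Rightarrow> bool" where
  "is_cpt_game G \<longleftrightarrow> (\<forall>i. acts G i \<noteq> {} \<and>
      continuous_on UNIV (valfun G i) \<and> strict_mono (valfun G i) \<and>
      valfun G i (refpt G i) = 0 \<and>
      prob_weighting (wplus G i) \<and> prob_weighting (wminus G i))"

text \<open>CPT value of the finite lottery {(P l, X l)}_{l in L} (rank-dependent formula, aggregated
over distinct outcome values z).\<close>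
definition cpt_value ::
  "real \<Rightarrow> (real \<Rightarrow> real) \<Rightarrow> (real \<Rightarrow> real) \<Rightarrow> (real \<Rightarrow> real) \<Rightarrow> 'o set \<Rightarrow> ('o \<Rightarrow> real) \<Rightarrow> ('o \<Rightarrow> real) \<Rightarrow> real"
  where
  "cpt_value r v wp wm L P X = (\<Sum>z\<in>X ` L.
     (if r < z then v z * (wp (\<Sum>l\<in>{l\<in>L. z \<le> X l}. P l) - wp (\<Sum>l\<in>{l\<in>L. z < X l}. P l))
      else if z < r then v z * (wm (\<Sum>l\<in>{l\<in>L. X l \<le> z}. P l) - wm (\<Sum>l\<in>{l\<in>L. X l < z}. P l))
      else 0))"

definition vsimplex :: "'a::finite set \<Rightarrow> (real ^ 'a) set" where
  "vsimplex S = {b. (\<forall>a. 0 \<le> b $ a) \<and> (\<forall>a. a \<notin> S \<longrightarrow> b $ a = 0) \<and> (\<Sum>a\<in>S. b $ a) = 1}"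

definition profiles :: "('p, 'a) cpt_game \<Rightarrow> ('p \<Rightarrow> 'a) set" where
  "profiles G = PiE UNIV (acts G)"

text \<open>A_{-i}: profiles of the opponents (extensional functions, undefined at i).\<close>
definition opp_profiles :: "('p, 'a) cpt_game \<Rightarrow> 'p \<Rightarrow> ('p \<Rightarrow> 'a) set" where
  "opp_profiles G i = PiE (UNIV - {i}) (acts G)"

definition joint :: "'p \<Rightarrow> real ^ 'a \<Rightarrow> (('p \<Rightarrow> 'a) \<Rightarrow> real) \<Rightarrow> ('p \<Rightarrow> 'a) \<Rightarrow> real" where
  "joint i b mu = (\<lambda>a. b $ (a i) * mu (a(i := undefined)))"

definition cpt_payoff :: "('p, 'a::finite) cpt_game \<Rightarrow> 'p \<Rightarrow> real ^ 'a \<Rightarrow> (('p \<Rightarrow> 'a) \<Rightarrow> real) \<Rightarrow> real" where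
  "cpt_payoff G i b mu = cpt_value (refpt G i) (valfun G i) (wplus G i) (wminus G i)
      (profiles G) (joint i b mu) (pay G i)"

definition best_resp :: "('p, 'a::finite) cpt_game \<Rightarrow> 'p \<Rightarrow> (('p \<Rightarrow> 'a) \<Rightarrow> real) \<Rightarrow> (real ^ 'a) set" where
  "best_resp G i mu = {b \<in> vsimplex (acts G i).
      \<forall>b' \<in> vsimplex (acts G i). cpt_payoff G i b' mu \<le> cpt_payoff G i b mu}"

definition prod_belief :: "('p::finite, 'a::finite) cpt_game \<Rightarrow> 'p \<Rightarrow> ('p \<Rightarrow> real ^ 'a) \<Rightarrow> ('p \<Rightarrow> 'a) \<Rightarrow> real" where
  "prod_belief G i \<sigma> = (\<lambda>am. if am \<in> opp_profiles G i then (\<Prod>j\<in>UNIV - {i}. \<sigma> j $ am j) else 0)"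

definition bb_conjecture :: "('p, 'a::finite) cpt_game \<Rightarrow> 'p \<Rightarrow> (real ^ 'a) measure \<Rightarrow> bool" where
  "bb_conjecture G i \<tau> \<longleftrightarrow> prob_space \<tau> \<and> sets \<tau> = sets (restrict_space borel (vsimplex (acts G i)))"

definition induced_conj :: "(real ^ 'a::finite) measure \<Rightarrow> real ^ 'a" where
  "induced_conj \<tau> = (\<chi> a. \<integral>b. b $ a \<partial>\<tau>)"

definition meas_support :: "('b::topological_space) measure \<Rightarrow> 'b set" where
  "meas_support M = {x \<in> space M. \<forall>U. open U \<and> x \<in> U \<longrightarrow> 0 < emeasure M (U \<inter> space M)}"

definition mixed_bb_nash :: "('p::finite, 'a::finite) cpt_game \<Rightarrow> ('p \<Rightarrow> (real ^ 'a) measure) \<Rightarrow> bool" where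
  "mixed_bb_nash G \<tau> \<longleftrightarrow> (\<forall>i. bb_conjecture G i (\<tau> i) \<and>
     (\<forall>b \<in> meas_support (\<tau> i). b \<in> best_resp G i (prod_belief G i (\<lambda>j. induced_conj (\<tau> j)))))"

end

theory Submission
  imports Defs
begin

text \<open>(i) Every black-box strategy in the support of an equilibrium conjecture \<open>\<tau>\<^sub>i\<close> is a best
response, and the support carries full measure, so the barycenter \<open>\<sigma>\<^sub>i(\<tau>\<^sub>i)\<close> of \<open>\<tau>\<^sub>i\<close> lies in
the closed convex hull of the best responses (a point outside would be strictly separated by a
hyperplane, which integration against \<open>\<tau>\<^sub>i\<close> contradicts).
(ii) The CPT payoff is continuous in the player's own mixed action, so the best-response set is
compact and its convex hull is already closed. Hence \<open>\<sigma>\<^sup>*\<^sub>i\<close> is a finite convex combination of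
best responses; the corresponding finitely supported measures form an equilibrium, because the
beliefs depend on the conjectures only through their barycenters \<open>\<sigma>\<^sup>*\<close>.\<close>

lemma AE_in_meas_support:
  fixes M :: "('b::second_countable_topology) measure"
  assumes "\<And>U. open U \<Longrightarrow> U \<inter> space M \<in> sets M"
  shows "AE x in M. x \<in> meas_support M"
proof -
  define F where "F = {U. open U \<and> emeasure M (U \<inter> space M) = 0}"
  obtain F' where F': "F' \<subseteq> F" "countable F'" "\<Union>F' = \<Union>F"
    using Lindelof[of F] unfolding F_def by blast
  have null: "(\<Union>U\<in>F'. U \<inter> space M) \<in> null_sets M"
  proof (rule null_sets_UN')
    fix U assume "U \<in> F'"
    then have "open U" "emeasure M (U \<inter> space M) = 0"
      using F' unfolding F_def by auto
    then show "U \<inter> space M \<in> null_sets M"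
      using assms by (auto intro: null_setsI)
  qed (rule F'(2))
  show ?thesis
  proof (rule AE_I'[OF null], safe)
    fix x assume x: "x \<in> space M" "x \<notin> meas_support M"
    then obtain U where U: "open U" "x \<in> U" "\<not> 0 < emeasure M (U \<inter> space M)"
      unfolding meas_support_def by auto
    then have "U \<in> F"
      unfolding F_def by (auto simp: zero_less_iff_neq_zero)
    then show "x \<in> (\<Union>U\<in>F'. U \<inter> space M)"
      using F' U x by auto
  qed
qed

lemma barycenter_in_closed_convex:
  fixes M :: "(real ^ 'a::finite) measure"
  assumes "prob_space M" and C: "closed C" "convex C"
    and AE: "AE x in M. x \<in> C" and int: "\<And>k. integrable M (\<lambda>x. x $ k)"
  shows "(\<chi> k. \<integral>x. x $ k \<partial>M) \<in> C"
proof (rule ccontr)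
  interpret prob_space M by fact
  let ?z = "\<chi> k. \<integral>x. x $ k \<partial>M"
  assume "?z \<notin> C"
  then obtain a b where ab: "a \<bullet> ?z < b" "\<forall>x\<in>C. b < a \<bullet> x"
    using separating_hyperplane_closed_point[OF C(2,1)] by blast
  have inner: "a \<bullet> y = (\<Sum>k\<in>UNIV. a $ k * y $ k)" for y
    by (simp add: inner_vec_def)
  have int_inner: "integrable M (\<lambda>x. a \<bullet> x)"
    unfolding inner using int by auto
  have "(\<integral>x. a \<bullet> x \<partial>M) = a \<bullet> ?z"
    unfolding inner using int by (simp add: Bochner_Integration.integral_sum)
  moreover have "AE x in M. b \<le> a \<bullet> x"
    using AE by eventually_elim (use ab(2) in force)
  then have "(\<integral>x. b \<partial>M) \<le> (\<integral>x. a \<bullet> x \<partial>M)"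
    by (intro integral_mono_AE) (use int_inner in auto)
  then have "b \<le> (\<integral>x. a \<bullet> x \<partial>M)"
    by (simp add: prob_space)
  ultimately show False
    using ab(1) by linarith
qed

lemma vsimplex_component_bounds:
  assumes "b \<in> vsimplex S"
  shows "0 \<le> b $ k \<and> b $ k \<le> 1"
proof (cases "k \<in> S")
  case True
  then have "b $ k \<le> (\<Sum>a\<in>S. b $ a)"
    using assms by (intro member_le_sum) (auto simp: vsimplex_def)
  then show ?thesis
    using assms by (auto simp: vsimplex_def)
qed (use assms in \<open>auto simp: vsimplex_def\<close>)

lemma space_bb_conjecture: "bb_conjecture G i \<tau> \<Longrightarrow> space \<tau> = vsimplex (acts G i)"
  unfolding bb_conjecture_def by (simp add: sets_eq_imp_space_eq space_restrict_space)

lemma induced_conj_in_closure_convex_hull: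
  assumes \<tau>: "bb_conjecture G i \<tau>" and supp: "meas_support \<tau> \<subseteq> C"
  shows "induced_conj \<tau> \<in> closure (convex hull C)"
proof -
  have P: "prob_space \<tau>" and sets: "sets \<tau> = sets (restrict_space borel (vsimplex (acts G i)))"
    using \<tau> unfolding bb_conjecture_def by auto
  have space: "space \<tau> = vsimplex (acts G i)"
    using space_bb_conjecture[OF \<tau>] .
  have "U \<inter> space \<tau> \<in> sets \<tau>" if "open U" for U
  proof -
    have "vsimplex (acts G i) \<inter> U \<in> sets (restrict_space borel (vsimplex (acts G i)))"
      using that by (auto simp: sets_restrict_space)
    then show ?thesis
      by (simp add: sets space Int_commute)
  qed
  then have "AE x in \<tau>. x \<in> meas_support \<tau>"
    by (rule AE_in_meas_support)
  moreover have "meas_support \<tau> \<subseteq> closure (convex hull C)"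
    using supp closure_subset hull_subset by (metis order_trans)
  ultimately have AE: "AE x in \<tau>. x \<in> closure (convex hull C)"
    by (metis (mono_tags, lifting) AE_mp AE_I2 subsetD)
  have int: "integrable \<tau> (\<lambda>x. x $ k)" for k
  proof (rule finite_measure.integrable_const_bound[where B=1])
    show "finite_measure \<tau>"
      using P by (simp add: prob_space_def)
    show "AE x in \<tau>. norm (x $ k) \<le> 1"
      by (rule AE_I2) (use vsimplex_component_bounds space in fastforce)
    show "(\<lambda>x. x $ k) \<in> borel_measurable \<tau>"
      unfolding measurable_cong_sets[OF sets refl]
      by (intro measurable_restrict_space1 borel_measurable_nth)
  qed
  show ?thesis
    unfolding induced_conj_def
    by (rule barycenter_in_closed_convex[OF P _ _ AE int]) (auto intro: convex_closure)
qed

text \<open>The map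
sends points outside \<open>S\<close> to some support point only to make it total into \<open>S\<close>; it is the
identity almost surely.\<close>

definition measure_pmf_on :: "'b::topological_space set \<Rightarrow> 'b pmf \<Rightarrow> 'b measure" where
  "measure_pmf_on S p =
     distr (measure_pmf p) (restrict_space borel S) (\<lambda>x. if x \<in> S then x else SOME y. y \<in> set_pmf p)"

lemma measurable_measure_pmf_on:
  assumes "set_pmf p \<subseteq> S"
  shows "(\<lambda>x. if x \<in> S then x else SOME y. y \<in> set_pmf p) \<in> measure_pmf p \<rightarrow>\<^sub>M restrict_space borel S"
proof -
  have "(SOME y. y \<in> set_pmf p) \<in> S"
    using assms set_pmf_not_empty[of p] by (metis some_in_eq subsetD)
  then show ?thesis
    by (simp add: space_restrict_space)
qed

lemma prob_space_measure_pmf_on: "set_pmf p \<subseteq> S \<Longrightarrow> prob_space (measure_pmf_on S p)"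
  unfolding measure_pmf_on_def by (intro measure_pmf.prob_space_distr measurable_measure_pmf_on)

lemma sets_measure_pmf_on: "sets (measure_pmf_on S p) = sets (restrict_space borel S)"
  by (simp add: measure_pmf_on_def)

lemma meas_support_measure_pmf_on_subset:
  assumes sub: "set_pmf p \<subseteq> S" and closed: "closed (set_pmf p)"
  shows "meas_support (measure_pmf_on S p) \<subseteq> set_pmf p"
proof
  fix x assume x: "x \<in> meas_support (measure_pmf_on S p)"
  show "x \<in> set_pmf p"
  proof (rule ccontr)
    let ?U = "- set_pmf p"
    let ?g = "\<lambda>x. if x \<in> S then x else SOME y. y \<in> set_pmf p"
    assume "x \<notin> set_pmf p"
    then have pos: "0 < emeasure (measure_pmf_on S p) (?U \<inter> S)"
      using x closed by (auto simp: meas_support_def measure_pmf_on_def space_restrict_space)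
    have "?U \<inter> S \<in> sets (restrict_space borel S)"
      using closed by (auto simp: sets_restrict_space)
    then have "emeasure (measure_pmf_on S p) (?U \<inter> S) =
        emeasure (measure_pmf p) (?g -` (?U \<inter> S) \<inter> space (measure_pmf p))"
      unfolding measure_pmf_on_def by (rule emeasure_distr[OF measurable_measure_pmf_on[OF sub]])
    also have "\<dots> = emeasure (measure_pmf p) (?g -` (?U \<inter> S) \<inter> set_pmf p)"
      by (simp add: emeasure_Int_set_pmf)
    also have "?g -` (?U \<inter> S) \<inter> set_pmf p = {}"
      using sub by auto
    finally show False using pos by simp
  qed
qed

lemma induced_conj_measure_pmf_on:
  fixes p :: "(real ^ 'a::finite) pmf"
  assumes sub: "set_pmf p \<subseteq> S" and fin: "finite (set_pmf p)"
  shows "induced_conj (measure_pmf_on S p) = (\<Sum>b\<in>set_pmf p. pmf p b *\<^sub>R b)"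
proof -
  let ?g = "\<lambda>x. if x \<in> S then x else SOME y. y \<in> set_pmf p"
  have "(\<integral>b. b $ k \<partial>measure_pmf_on S p) = (\<integral>x. ?g x $ k \<partial>measure_pmf p)" for k
    unfolding measure_pmf_on_def
    by (intro integral_distr measurable_measure_pmf_on sub measurable_restrict_space1 borel_measurable_nth)
  also have "(\<integral>x. ?g x $ k \<partial>measure_pmf p) = (\<Sum>b\<in>set_pmf p. ?g b $ k * pmf p b)" for k
    by (rule integral_measure_pmf_real) (use fin in auto)
  also have "(\<Sum>b\<in>set_pmf p. ?g b $ k * pmf p b) = (\<Sum>b\<in>set_pmf p. pmf p b * b $ k)" for k
    using sub by (intro sum.cong) auto
  finally show ?thesis
    by (simp add: induced_conj_def vec_eq_iff sum_component)
qed

lemma convex_hull_imp_finite_pmf: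
  assumes "x \<in> convex hull C"
  shows "\<exists>p. finite (set_pmf p) \<and> set_pmf p \<subseteq> C \<and> (\<Sum>y\<in>set_pmf p. pmf p y *\<^sub>R y) = x"
proof -
  obtain s u where s: "finite s" "s \<subseteq> C" and u: "\<forall>y\<in>s. 0 \<le> u y" "sum u s = 1"
    and x: "(\<Sum>y\<in>s. u y *\<^sub>R y) = x"
    using assms unfolding convex_hull_explicit by blast
  define f where "f y = (if y \<in> s then u y else 0)" for y
  have f_nonneg: "0 \<le> f y" for y
    using u by (simp add: f_def)
  have "(\<integral>\<^sup>+ y. ennreal (f y) \<partial>count_space UNIV) = (\<Sum>y\<in>s. ennreal (f y))"
    using s by (intro nn_integral_count_space') (auto simp: f_def)
  also have "\<dots> = ennreal (sum u s)"
    using u by (simp add: f_def sum_ennreal)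
  finally have f_total: "(\<integral>\<^sup>+ y. ennreal (f y) \<partial>count_space UNIV) = 1"
    using u by simp
  define p where "p = embed_pmf f"
  have pmf_p: "pmf p y = f y" for y
    unfolding p_def by (rule pmf_embed_pmf[OF f_nonneg f_total])
  have set_p: "set_pmf p \<subseteq> s"
    by (auto simp: set_pmf_iff pmf_p f_def split: if_splits)
  have "(\<Sum>y\<in>set_pmf p. pmf p y *\<^sub>R y) = (\<Sum>y\<in>s. pmf p y *\<^sub>R y)"
    using s set_p by (intro sum.mono_neutral_left) (auto simp: set_pmf_iff)
  also have "\<dots> = x"
    using x by (simp add: pmf_p f_def)
  finally show ?thesis
    using s set_p finite_subset by blast
qed

lemma finite_bb_conjecture_with_induced_conj:
  assumes "\<sigma> \<in> convex hull C" and "C \<subseteq> vsimplex (acts G i)"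
  shows "\<exists>\<tau>. bb_conjecture G i \<tau> \<and> finite (meas_support \<tau>) \<and> meas_support \<tau> \<subseteq> C \<and>
             induced_conj \<tau> = \<sigma>"
proof -
  obtain p where p: "finite (set_pmf p)" "set_pmf p \<subseteq> C"
    and mean: "(\<Sum>y\<in>set_pmf p. pmf p y *\<^sub>R y) = \<sigma>"
    using convex_hull_imp_finite_pmf[OF assms(1)] by blast
  let ?\<tau> = "measure_pmf_on (vsimplex (acts G i)) p"
  have sub: "set_pmf p \<subseteq> vsimplex (acts G i)"
    using p(2) assms(2) by blast
  have supp: "meas_support ?\<tau> \<subseteq> set_pmf p"
    using p(1) sub by (intro meas_support_measure_pmf_on_subset finite_imp_closed)
  have "bb_conjecture G i ?\<tau>"
    unfolding bb_conjecture_def using sub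
    by (simp add: prob_space_measure_pmf_on sets_measure_pmf_on)
  moreover have "induced_conj ?\<tau> = \<sigma>"
    using mean induced_conj_measure_pmf_on[OF sub p(1)] by simp
  ultimately show ?thesis
    using supp p finite_subset by (metis order_trans)
qed

lemma joint_prod_belief_nonneg:
  assumes "b \<in> vsimplex (acts G i)" "\<forall>j. \<sigma> j \<in> vsimplex (acts G j)"
  shows "0 \<le> joint i b (prod_belief G i \<sigma>) a"
  using assms unfolding joint_def prod_belief_def vsimplex_def
  by (auto intro!: mult_nonneg_nonneg prod_nonneg)

lemma sum_joint_prod_belief:
  assumes b: "b \<in> vsimplex (acts G i)" and \<sigma>: "\<forall>j. \<sigma> j \<in> vsimplex (acts G j)"
  shows "(\<Sum>a\<in>profiles G. joint i b (prod_belief G i \<sigma>) a) = 1"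
proof -
  define c where "c = \<sigma>(i := b)"
  have c: "(\<Sum>x\<in>acts G j. c j $ x) = 1" for j
    using b \<sigma> unfolding c_def vsimplex_def by auto
  have joint: "joint i b (prod_belief G i \<sigma>) a = (\<Prod>j\<in>UNIV. c j $ a j)" if "a \<in> profiles G" for a
  proof -
    have "a(i := undefined) \<in> opp_profiles G i"
      using that unfolding opp_profiles_def profiles_def by (auto simp: PiE_def extensional_def)
    then have "joint i b (prod_belief G i \<sigma>) a = b $ a i * (\<Prod>j\<in>UNIV - {i}. c j $ a j)"
      unfolding joint_def prod_belief_def c_def by (auto intro: prod.cong)
    also have "\<dots> = (\<Prod>j\<in>UNIV. c j $ a j)"
      by (subst prod.remove[of UNIV i]) (auto simp: c_def)
    finally show ?thesis .
  qed
  have "(\<Sum>a\<in>profiles G. joint i b (prod_belief G i \<sigma>) a) = (\<Sum>a\<in>PiE UNIV (acts G). \<Prod>j\<in>UNIV. c j $ a j)"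
    using joint unfolding profiles_def by (intro sum.cong) auto
  also have "\<dots> = (\<Prod>j\<in>UNIV. \<Sum>x\<in>acts G j. c j $ x)"
    by (rule prod_sum_PiE[symmetric]) auto
  finally show ?thesis
    using c by simp
qed

lemma sum_joint_prod_belief_in_unit_interval:
  assumes "b \<in> vsimplex (acts G i)" "\<forall>j. \<sigma> j \<in> vsimplex (acts G j)" "A \<subseteq> profiles G"
  shows "(\<Sum>a\<in>A. joint i b (prod_belief G i \<sigma>) a) \<in> {0..1}"
proof -
  have "(\<Sum>a\<in>A. joint i b (prod_belief G i \<sigma>) a) \<le> (\<Sum>a\<in>profiles G. joint i b (prod_belief G i \<sigma>) a)"
    using assms joint_prod_belief_nonneg by (intro sum_mono2) (auto simp: profiles_def)
  then show ?thesis
    using assms sum_joint_prod_belief[OF assms(1,2)]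
    by (auto intro!: sum_nonneg joint_prod_belief_nonneg)
qed

text \<open>The weighting functions need only be continuous on \<open>{0..1}\<close>, since they are applied to
partial sums of probability vectors.\<close>

lemma continuous_on_cpt_value:
  assumes "continuous_on {0..1} wp" and "continuous_on {0..1} wm"
    and cont: "\<And>l. continuous_on S (\<lambda>b. P b l)"
    and unit: "\<And>b A. b \<in> S \<Longrightarrow> A \<subseteq> L \<Longrightarrow> (\<Sum>l\<in>A. P b l) \<in> {0..1}"
  shows "continuous_on S (\<lambda>b. cpt_value r v wp wm L (P b) X)"
proof -
  have weight: "continuous_on S (\<lambda>b. w (\<Sum>l\<in>A. P b l))"
    if "continuous_on {0..1} w" "A \<subseteq> L" for w A
    using unit that by (intro continuous_on_compose2[OF that(1)] continuous_on_sum cont) auto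
  show ?thesis
    unfolding cpt_value_def
  proof (intro continuous_on_sum)
    fix z
    show "continuous_on S (\<lambda>b. if r < z then v z * (wp (\<Sum>l\<in>{l \<in> L. z \<le> X l}. P b l) - wp (\<Sum>l\<in>{l \<in> L. z < X l}. P b l))
      else if z < r then v z * (wm (\<Sum>l\<in>{l \<in> L. X l \<le> z}. P b l) - wm (\<Sum>l\<in>{l \<in> L. X l < z}. P b l))
      else 0)"
      by (cases "r < z"; cases "z < r") (auto intro!: continuous_intros weight assms(1,2))
  qed
qed

lemma compact_vsimplex: "compact (vsimplex S)"
proof -
  have "vsimplex S = (\<Inter>a. {b. 0 \<le> b $ a}) \<inter> (\<Inter>a\<in>-S. {b. b $ a = 0}) \<inter> {b. (\<Sum>a\<in>S. b $ a) = 1}"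
    unfolding vsimplex_def by auto
  then have "closed (vsimplex S)"
    by (simp only:) (intro closed_Int closed_INT closed_Collect_le closed_Collect_eq continuous_intros ballI)
  moreover have "vsimplex S \<subseteq> cbox 0 1"
    using vsimplex_component_bounds by (fastforce simp: mem_box_cart)
  ultimately show ?thesis
    by (meson bounded_cbox bounded_subset compact_eq_bounded_closed)
qed

lemma compact_best_resp:
  assumes "is_cpt_game G" and \<sigma>: "\<forall>j. \<sigma> j \<in> vsimplex (acts G j)"
  shows "compact (best_resp G i (prod_belief G i \<sigma>))"
proof -
  let ?S = "vsimplex (acts G i)"
  let ?f = "\<lambda>b. cpt_payoff G i b (prod_belief G i \<sigma>)"
  have "continuous_on ?S ?f"
    unfolding cpt_payoff_def
  proof (rule continuous_on_cpt_value)
    show "continuous_on {0..1} (wplus G i)" "continuous_on {0..1} (wminus G i)"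
      using assms(1) unfolding is_cpt_game_def prob_weighting_def by auto
    show "continuous_on ?S (\<lambda>b. joint i b (prod_belief G i \<sigma>) a)" for a
      unfolding joint_def by (intro continuous_intros)
    show "(\<Sum>a\<in>A. joint i b (prod_belief G i \<sigma>) a) \<in> {0..1}" if "b \<in> ?S" "A \<subseteq> profiles G" for b A
      using that(1) \<sigma> that(2) by (rule sum_joint_prod_belief_in_unit_interval)
  qed
  then have "closed {b \<in> ?S. ?f b' \<le> ?f b}" for b'
    by (intro continuous_on_closed_Collect_le continuous_on_const compact_imp_closed compact_vsimplex)
  then have "closed (\<Inter>b'\<in>?S. {b \<in> ?S. ?f b' \<le> ?f b})"
    by (intro closed_INT) auto
  moreover have "best_resp G i (prod_belief G i \<sigma>) = ?S \<inter> (\<Inter>b'\<in>?S. {b \<in> ?S. ?f b' \<le> ?f b})"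
    unfolding best_resp_def by blast
  ultimately show ?thesis
    using compact_Int_closed[OF compact_vsimplex] by simp
qed

lemma closure_convex_hull_best_resp:
  assumes "is_cpt_game G" and "\<forall>j. \<sigma> j \<in> vsimplex (acts G j)"
  shows "closure (convex hull (best_resp G i (prod_belief G i \<sigma>))) =
    convex hull (best_resp G i (prod_belief G i \<sigma>))"
  using compact_best_resp[OF assms] by (simp add: closure_closed compact_convex_hull compact_imp_closed)

theorem proposition1:
  fixes G :: "('p::finite, 'a::finite) cpt_game"
  assumes "is_cpt_game G"
  shows "(\<forall>\<tau>. mixed_bb_nash G \<tau> \<longrightarrow>
            (\<forall>i. induced_conj (\<tau> i) \<in>
                   closure (convex hull (best_resp G i (prod_belief G i (\<lambda>j. induced_conj (\<tau> j)))))))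
       \<and> (\<forall>\<sigma>. (\<forall>i. \<sigma> i \<in> vsimplex (acts G i)) \<and>
              (\<forall>i. \<sigma> i \<in> closure (convex hull (best_resp G i (prod_belief G i \<sigma>)))) \<longrightarrow>
            (\<exists>\<tau>. mixed_bb_nash G \<tau> \<and> (\<forall>i. finite (meas_support (\<tau> i))) \<and>
                 (\<forall>i. induced_conj (\<tau> i) = \<sigma> i)))"
proof (intro conjI allI impI)
  fix \<tau> i
  assume "mixed_bb_nash G \<tau>"
  then have "bb_conjecture G i (\<tau> i)"
    and "meas_support (\<tau> i) \<subseteq> best_resp G i (prod_belief G i (\<lambda>j. induced_conj (\<tau> j)))"
    unfolding mixed_bb_nash_def by auto
  then show "induced_conj (\<tau> i) \<in>
      closure (convex hull (best_resp G i (prod_belief G i (\<lambda>j. induced_conj (\<tau> j)))))"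
    by (rule induced_conj_in_closure_convex_hull)
next
  fix \<sigma>
  assume "(\<forall>i. \<sigma> i \<in> vsimplex (acts G i)) \<and>
    (\<forall>i. \<sigma> i \<in> closure (convex hull (best_resp G i (prod_belief G i \<sigma>))))"
  then have \<sigma>: "\<forall>i. \<sigma> i \<in> vsimplex (acts G i)"
    and "\<sigma> i \<in> closure (convex hull (best_resp G i (prod_belief G i \<sigma>)))" for i
    by auto
  then have "\<sigma> i \<in> convex hull (best_resp G i (prod_belief G i \<sigma>))" for i
    by (simp add: closure_convex_hull_best_resp[OF assms \<sigma>])
  then have "\<forall>i. \<exists>t. bb_conjecture G i t \<and> finite (meas_support t) \<and>
      meas_support t \<subseteq> best_resp G i (prod_belief G i \<sigma>) \<and> induced_conj t = \<sigma> i"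
    by (intro allI finite_bb_conjecture_with_induced_conj) (auto simp: best_resp_def)
  then obtain \<tau> where \<tau>: "\<forall>i. bb_conjecture G i (\<tau> i) \<and> finite (meas_support (\<tau> i)) \<and>
      meas_support (\<tau> i) \<subseteq> best_resp G i (prod_belief G i \<sigma>) \<and> induced_conj (\<tau> i) = \<sigma> i"
    by (rule choice[THEN exE])
  then have "(\<lambda>j. induced_conj (\<tau> j)) = \<sigma>"
    by simp
  with \<tau> have "mixed_bb_nash G \<tau>"
    unfolding mixed_bb_nash_def by auto
  with \<tau> show "\<exists>\<tau>. mixed_bb_nash G \<tau> \<and> (\<forall>i. finite (meas_support (\<tau> i))) \<and>
      (\<forall>i. induced_conj (\<tau> i) = \<sigma> i)"
    by blast
qed

end
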